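(* For every constant $\epsilon<\frac12$ the following holds. There is no pair of maps $g_r,g_c$, where $g_r$ assigns to each row payoff matrix $R\in[0,1]^{n\times n}$ a mixed strategy over rows and $g_c$ assigns to each pair $(R,C)$ of matrices in $[0,1]^{n\times n}$ a mixed strategy over columns, such that for every $n$ and every bimatrix game $(R,C)$ the profile $(g_r(R),g_c(R,C))$ is an $\epsilon$-approximate Nash equilibrium. In other words, with unlimited one-way communication (from the row player to the column player only) it is impossible to guarantee an $\epsilon$-approximate Nash equilibrium for any constant $\epsilon<\frac12$.
   Context: A bimatrix game $(R,C)$ has payoff matrices with entries in $[0,1]$ for the row and column player; mixed strategies $\mathbf{x},\mathbf{y}$ give payoffs $\mathbf{x}^TR\mathbf{y}$ and $\mathbf{x}^TC\mathbf{y}$. $(\mathbf{x},\mathbf{y})$ is an $\epsilon$-approximate Nash equilibrium if for all pure strategies $i$: $\mathbf{e}_i^TR\mathbf{y}\le\mathbf{x}^TR\mathbf{y}+\epsilon$ and $\mathbf{x}^TC\mathbf{e}_i\le\mathbf{x}^TC\mathbf{y}+\epsilon$. In one-way communication the row player may send information to the column player but receives none, so his output depends only on $R$, while the column player's output may depend on $C$ and on everything the row player sends (hence, with unlimited communication, on all of $R$). *)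

theory Defs
  imports "HOL-Analysis.Analysis"
begin

(* An n x n matrix is represented as a function nat => nat => real, only the entries
   with indices in {..<n} are relevant. *)

definition payoff_matrix :: "nat \<Rightarrow> (nat \<Rightarrow> nat \<Rightarrow> real) \<Rightarrow> bool" where
  "payoff_matrix n M \<longleftrightarrow> (\<forall>i<n. \<forall>j<n. 0 \<le> M i j \<and> M i j \<le> 1)"

definition mixed_strategy :: "nat \<Rightarrow> (nat \<Rightarrow> real) \<Rightarrow> bool" where
  "mixed_strategy n x \<longleftrightarrow> (\<forall>i. 0 \<le> x i) \<and> (\<forall>i\<ge>n. x i = 0) \<and> (\<Sum>i<n. x i) = 1"

definition payoff :: "nat \<Rightarrow> (nat \<Rightarrow> real) \<Rightarrow> (nat \<Rightarrow> nat \<Rightarrow> real) \<Rightarrow> (nat \<Rightarrow> real) \<Rightarrow> real" where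
  "payoff n x M y = (\<Sum>i<n. \<Sum>j<n. x i * M i j * y j)"

definition pure :: "nat \<Rightarrow> nat \<Rightarrow> real" where
  "pure i = (\<lambda>k. if k = i then 1 else 0)"

definition approx_NE ::
  "real \<Rightarrow> nat \<Rightarrow> (nat \<Rightarrow> nat \<Rightarrow> real) \<Rightarrow> (nat \<Rightarrow> nat \<Rightarrow> real) \<Rightarrow> (nat \<Rightarrow> real) \<Rightarrow> (nat \<Rightarrow> real) \<Rightarrow> bool" where
  "approx_NE \<epsilon> n R C x y \<longleftrightarrow>
     (\<forall>i<n. payoff n (pure i) R y \<le> payoff n x R y + \<epsilon>) \<and>
     (\<forall>i<n. payoff n x C (pure i) \<le> payoff n x C y + \<epsilon>)"

end

theory Submission
  imports Defs
begin

text \<open>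
  The row player commits to a strategy knowing only \<open>R\<close>. Let the rows be the subsets of at most
  \<open>t\<close> of the first \<open>m\<close> columns, a row earning the column player's mass on its subset. Any mixed row
  strategy covers the columns with total weight at most \<open>t\<close>, so some column \<open>k\<close> is covered with
  probability at most \<open>t/m\<close>. Making \<open>k\<close> dominant for the column player forces \<open>y\<^sub>k \<ge> 1 - \<epsilon>\<close>; then
  the row consisting of \<open>k\<close> and the \<open>t - 1\<close> heaviest other columns improves on the row player's
  payoff by at least \<open>1 - \<epsilon> - t/m - \<epsilon>/t\<close>, which exceeds \<open>\<epsilon>\<close> once \<open>t\<close> and \<open>m/t\<close> are large.
\<close>

lemma exists_top_subset:
  fixes y :: "'a \<Rightarrow> real"
  assumes "finite A" "s \<le> card A"
  shows "\<exists>T\<subseteq>A. card T = s \<and> (\<forall>a\<in>T. \<forall>b\<in>A - T. y b \<le> y a)"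
  using assms(2)
proof (induction s)
  case 0
  then show ?case by auto
next
  case (Suc s)
  then obtain T where T: "T \<subseteq> A" "card T = s" "\<forall>a\<in>T. \<forall>b\<in>A - T. y b \<le> y a"
    by auto
  have "finite T" "finite (A - T)"
    using T(1) assms(1) finite_subset by auto
  have "card T < card A"
    using Suc.prems T(2) by simp
  then have "A - T \<noteq> {}"
    using card_mono[OF \<open>finite T\<close>] by (metis Diff_eq_empty_iff not_le)
  then have "Max (y ` (A - T)) \<in> y ` (A - T)"
    using \<open>finite (A - T)\<close> by (intro Max_in) auto
  then obtain b where b: "b \<in> A - T" "y b = Max (y ` (A - T))"
    by auto
  then have "\<forall>c\<in>A - T. y c \<le> y b"
    using \<open>finite (A - T)\<close> by simp
  then show ?case
    using T b \<open>finite T\<close> by (intro exI[of _ "insert b T"]) auto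
qed

lemma weighted_sum_le_threshold:
  fixes w y :: "'a \<Rightarrow> real"
  assumes "finite A" "T \<subseteq> A" "\<forall>c\<in>A. 0 \<le> w c \<and> w c \<le> 1" "sum w A \<le> t" "0 \<le> \<beta>"
    "\<forall>a\<in>T. \<beta> \<le> y a" "\<forall>b\<in>A - T. y b \<le> \<beta>"
  shows "(\<Sum>c\<in>A. w c * y c) \<le> sum y T + \<beta> * (t - card T)"
proof -
  have "(\<Sum>c\<in>A. w c * y c) = \<beta> * sum w A + (\<Sum>c\<in>A. w c * (y c - \<beta>))"
    by (simp add: algebra_simps sum.distrib sum_distrib_left sum_subtractf)
  also have "(\<Sum>c\<in>A. w c * (y c - \<beta>)) \<le> (\<Sum>c\<in>T. w c * (y c - \<beta>))"
  proof -
    have "(\<Sum>c\<in>A - T. w c * (y c - \<beta>)) \<le> 0"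
      using assms(3,7) by (intro sum_nonpos) (simp add: mult_nonneg_nonpos)
    then show ?thesis
      using assms(1,2) by (simp add: sum.subset_diff[of T A])
  qed
  also have "(\<Sum>c\<in>T. w c * (y c - \<beta>)) \<le> (\<Sum>c\<in>T. y c - \<beta>)"
    using assms(2,3,6) by (intro sum_mono) (simp add: mult_left_le_one_le subset_iff)
  also have "\<beta> * sum w A \<le> \<beta> * t"
    using assms(4,5) by (rule mult_left_mono)
  finally show ?thesis
    by (simp add: sum_subtractf algebra_simps)
qed

lemma weighted_sum_le_top_subset:
  fixes w y :: "'a \<Rightarrow> real" and t :: nat
  assumes "finite A" "0 < t" "\<forall>c\<in>A. 0 \<le> w c \<and> w c \<le> 1" "sum w A \<le> t" "\<forall>c\<in>A. 0 \<le> y c"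
  shows "\<exists>T\<subseteq>A. card T < t \<and> (\<Sum>c\<in>A. w c * y c) \<le> sum y T + sum y A / t"
proof (cases "card A < t")
  case True
  have "(\<Sum>c\<in>A. w c * y c) \<le> sum y A"
    using assms(3,5) by (intro sum_mono) (simp add: mult_left_le_one_le)
  moreover have "0 \<le> sum y A / t"
    using assms(5) by (simp add: sum_nonneg)
  ultimately show ?thesis
    using True by (intro exI[of _ A]) auto
next
  case False
  then obtain T' where T': "T' \<subseteq> A" "card T' = t" "\<forall>a\<in>T'. \<forall>b\<in>A - T'. y b \<le> y a"
    using exists_top_subset[OF assms(1), of t y] by auto
  have "finite T'" "T' \<noteq> {}"
    using T' assms(1,2) finite_subset by auto
  \<comment> \<open>\<open>\<beta>\<close> is the \<open>t\<close>-th largest value of \<open>y\<close> on \<open>A\<close>, hence at most the mean of the top \<open>t\<close>\<close>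
  define \<beta> where "\<beta> = Min (y ` T')"
  have "\<beta> \<in> y ` T'"
    unfolding \<beta>_def using \<open>finite T'\<close> \<open>T' \<noteq> {}\<close> by (intro Min_in) auto
  then obtain b where b: "b \<in> T'" "y b = \<beta>"
    by auto
  have above: "\<forall>a\<in>T' - {b}. \<beta> \<le> y a"
    using \<open>finite T'\<close> unfolding \<beta>_def by simp
  have below: "\<forall>c\<in>A - (T' - {b}). y c \<le> \<beta>"
    using T'(3) b by auto
  have "real t * \<beta> \<le> sum y T'"
    using sum_bounded_below[of T' \<beta> y] above b T'(2) by (metis Diff_iff order_refl singletonD)
  also have "\<dots> \<le> sum y A"
    using T'(1) assms(1,5) by (intro sum_mono2) auto
  finally have "\<beta> \<le> sum y A / t"
    using assms(2) by (simp add: field_simps)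
  have "0 \<le> \<beta>"
    using b T'(1) assms(5) by auto
  have "(\<Sum>c\<in>A. w c * y c) \<le> sum y (T' - {b}) + \<beta> * (real t - card (T' - {b}))"
    using weighted_sum_le_threshold[OF assms(1) _ assms(3,4) \<open>0 \<le> \<beta>\<close> above below] T'(1) by auto
  also have "\<dots> = sum y (T' - {b}) + \<beta>"
    using b T'(2) \<open>finite T'\<close> assms(2) by simp
  finally show ?thesis
    using \<open>\<beta> \<le> sum y A / t\<close> b T' \<open>finite T'\<close> assms(2)
    by (intro exI[of _ "T' - {b}"]) auto
qed

lemma ex_le_average:
  fixes f :: "'a \<Rightarrow> real"
  assumes "finite A" "A \<noteq> {}"
  shows "\<exists>a\<in>A. f a \<le> sum f A / card A"
proof (rule ccontr)
  assume "\<not> ?thesis"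
  then have "(\<Sum>a\<in>A. sum f A / card A) < sum f A"
    using assms by (intro sum_strict_mono) auto
  then show False
    using assms by simp
qed

lemma exists_parameters:
  fixes \<epsilon> :: real
  assumes "\<epsilon> < 1/2"
  obtains t m :: nat where "0 < t" "0 < m" "real t / real m + \<epsilon> / real t < 1 - 2 * \<epsilon>"
proof -
  define a where "a = 1 - 2 * \<epsilon>"
  have "0 < a"
    using assms by (simp add: a_def)
  obtain t :: nat where t: "2 / a < t"
    using reals_Archimedean2 by blast
  obtain m :: nat where m: "2 * t / a < m"
    using reals_Archimedean2 by blast
  have "0 < 2 / a"
    using \<open>0 < a\<close> by simp
  with t have "0 < real t"
    by linarith
  have "0 \<le> 2 * real t / a"
    using \<open>0 < a\<close> by simp
  with m have "0 < real m"
    by linarith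
  have "real t / m < a / 2"
    using m \<open>0 < a\<close> \<open>0 < real m\<close> by (simp add: pos_divide_less_eq pos_less_divide_eq mult.commute)
  moreover have "\<epsilon> / t < a / 2"
  proof -
    have "\<epsilon> / t \<le> (1/2) / t"
      using assms by (intro divide_right_mono) auto
    also have "\<dots> < a / 2"
      using t \<open>0 < a\<close> \<open>0 < real t\<close> by (simp add: pos_divide_less_eq pos_less_divide_eq mult.commute)
    finally show ?thesis .
  qed
  ultimately have "real t / m + \<epsilon> / t < a / 2 + a / 2"
    by (rule add_strict_mono)
  then have "real t / m + \<epsilon> / t < 1 - 2 * \<epsilon>"
    by (simp add: a_def)
  moreover have "0 < t" "0 < m"
    using \<open>0 < real t\<close> \<open>0 < real m\<close> by simp_all
  ultimately show thesis
    using that by blast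
qed

lemma payoff_pure_left:
  assumes "i < n"
  shows "payoff n (pure i) M y = (\<Sum>j<n. M i j * y j)"
proof -
  have "payoff n (pure i) M y = (\<Sum>i'<n. if i' = i then \<Sum>j<n. M i' j * y j else 0)"
    unfolding payoff_def pure_def by (intro sum.cong) auto
  then show ?thesis
    using assms by simp
qed

lemma payoff_pure_right:
  "j < n \<Longrightarrow> payoff n x M (pure j) = (\<Sum>i<n. x i * M i j)"
  unfolding payoff_def pure_def by (simp add: if_distrib cong: if_cong)

lemma payoff_eq_sum_pure_right:
  "payoff n x M y = (\<Sum>j<n. payoff n x M (pure j) * y j)"
proof -
  have "payoff n x M y = (\<Sum>j<n. \<Sum>i<n. x i * M i j * y j)"
    unfolding payoff_def by (rule sum.swap)
  also have "\<dots> = (\<Sum>j<n. payoff n x M (pure j) * y j)"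
    by (simp add: payoff_pure_right sum_distrib_right)
  finally show ?thesis .
qed

lemma payoff_pure_right_bounds:
  assumes "payoff_matrix n M" "mixed_strategy n x" "j < n"
  shows "0 \<le> payoff n x M (pure j)" "payoff n x M (pure j) \<le> 1"
proof -
  have "0 \<le> x i * M i j \<and> x i * M i j \<le> x i" if "i < n" for i
    using assms that by (auto simp: payoff_matrix_def mixed_strategy_def mult_left_le)
  then have "0 \<le> (\<Sum>i<n. x i * M i j)" "(\<Sum>i<n. x i * M i j) \<le> (\<Sum>i<n. x i)"
    by (auto intro: sum_nonneg sum_mono)
  then show "0 \<le> payoff n x M (pure j)" "payoff n x M (pure j) \<le> 1"
    using assms(2,3) by (simp_all add: payoff_pure_right mixed_strategy_def)
qed

lemma mixed_strategy_le_one: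
  assumes "mixed_strategy n x"
  shows "x i \<le> 1"
proof (cases "i < n")
  case True
  then have "x i \<le> (\<Sum>j<n. x j)"
    using assms by (intro member_le_sum) (auto simp: mixed_strategy_def)
  then show ?thesis
    using assms by (simp add: mixed_strategy_def)
qed (use assms in \<open>simp add: mixed_strategy_def\<close>)

lemma approx_NE_column_all_ones:
  assumes "mixed_strategy n x" "k < n" "approx_NE \<epsilon> n R (\<lambda>i j. if j = k then 1 else 0) x y"
  shows "1 - \<epsilon> \<le> y k"
proof -
  let ?C = "\<lambda>i j. if j = k then 1 else 0 :: real"
  have payoff_C: "payoff n x ?C z = z k" for z
  proof -
    have "payoff n x ?C z = (\<Sum>i<n. x i * z k)"
      unfolding payoff_def using assms(2)
      by (intro sum.cong refl)
        (simp add: sum_distrib_left[symmetric] mult.assoc if_distrib[where f="\<lambda>c. c * _"] cong: if_cong)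
    also have "\<dots> = z k"
      using assms(1) by (simp add: sum_distrib_right[symmetric] mixed_strategy_def)
    finally show ?thesis .
  qed
  then have "payoff n x ?C (pure k) \<le> payoff n x ?C y + \<epsilon>"
    using assms(2,3) unfolding approx_NE_def by blast
  then show ?thesis
    using payoff_C[of "pure k"] payoff_C[of y] by (simp add: pure_def)
qed

definition subset_matrix :: "(nat \<Rightarrow> nat set) \<Rightarrow> nat \<Rightarrow> nat \<Rightarrow> real" where
  "subset_matrix h i j = (if j \<in> h i then 1 else 0)"

lemma payoff_matrix_subset_matrix: "payoff_matrix n (subset_matrix h)"
  unfolding payoff_matrix_def subset_matrix_def by simp

lemma sum_subset_matrix:
  "finite B \<Longrightarrow> (\<Sum>j\<in>B. subset_matrix h i j * y j) = sum y (B \<inter> h i)"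
  by (simp add: subset_matrix_def sum.inter_restrict if_distrib[where f="\<lambda>c. c * _"] cong: if_cong)

lemma payoff_pure_left_subset_matrix:
  assumes "i < n" "h i \<subseteq> {..<n}"
  shows "payoff n (pure i) (subset_matrix h) y = sum y (h i)"
  using assms by (simp add: payoff_pure_left sum_subset_matrix Int_absorb1)

lemma sum_payoff_pure_right_subset_matrix:
  assumes x: "mixed_strategy n x" and "B \<subseteq> {..<n}"
    and rows: "\<And>i. i < n \<Longrightarrow> h i \<subseteq> B \<and> card (h i) \<le> t"
  shows "(\<Sum>j\<in>B. payoff n x (subset_matrix h) (pure j)) \<le> t"
proof -
  have "finite B"
    using assms(2) finite_subset by blast
  have "(\<Sum>j\<in>B. payoff n x (subset_matrix h) (pure j)) = (\<Sum>j\<in>B. \<Sum>i<n. x i * subset_matrix h i j)"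
    using assms(2) by (intro sum.cong) (auto simp: payoff_pure_right)
  also have "\<dots> = (\<Sum>i<n. x i * (\<Sum>j\<in>B. subset_matrix h i j))"
    by (simp add: sum.swap[of _ B] sum_distrib_left)
  also have "\<dots> = (\<Sum>i<n. x i * card (h i))"
  proof (intro sum.cong refl)
    fix i assume "i \<in> {..<n}"
    then show "x i * (\<Sum>j\<in>B. subset_matrix h i j) = x i * card (h i)"
      using sum_subset_matrix[OF \<open>finite B\<close>, of h i "\<lambda>_. 1"] rows by (simp add: Int_absorb1)
  qed
  also have "\<dots> \<le> (\<Sum>i<n. x i * t)"
    using rows x by (intro sum_mono mult_left_mono) (auto simp: mixed_strategy_def)
  also have "\<dots> = t"
    using x by (simp add: sum_distrib_right[symmetric] mixed_strategy_def)
  finally show ?thesis .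
qed

lemma exists_enumeration_bounded_subsets:
  fixes m t :: nat
  assumes "0 < t"
  obtains n h where "bij_betw h {..<n} {S. S \<subseteq> {..<m} \<and> card S \<le> t}" "m \<le> n"
proof -
  define D where "D = {S. S \<subseteq> {..<m} \<and> card S \<le> t}"
  have "finite D"
    by (rule finite_subset[of _ "Pow {..<m}"]) (auto simp: D_def)
  then obtain h where "bij_betw h {..<card D} D"
    using ex_bij_betw_nat_finite by (metis atLeast0LessThan)
  moreover have "card {..<m} \<le> card D"
    using assms \<open>finite D\<close> by (intro card_inj_on_le[of "\<lambda>j. {j}"]) (auto simp: D_def inj_on_def)
  ultimately show thesis
    using that unfolding D_def by simp
qed

lemma subset_matrix_exists_light_column:
  fixes m t :: nat
  assumes h: "bij_betw h {..<n} {S. S \<subseteq> {..<m} \<and> card S \<le> t}"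
    and "0 < m" "m \<le> n" and x: "mixed_strategy n x"
  obtains k where "k < m" "payoff n x (subset_matrix h) (pure k) \<le> t / m"
proof -
  let ?w = "\<lambda>j. payoff n x (subset_matrix h) (pure j)"
  have "sum ?w {..<m} \<le> t"
    using h \<open>m \<le> n\<close> by (auto simp: bij_betw_def intro!: sum_payoff_pure_right_subset_matrix[OF x])
  then have average: "sum ?w {..<m} / m \<le> t / m"
    by (simp add: divide_right_mono)
  obtain k where "k < m" "?w k \<le> sum ?w {..<m} / m"
    using ex_le_average[of "{..<m}" ?w] \<open>0 < m\<close> by auto
  with average show thesis
    using that by force
qed

lemma subset_matrix_profitable_deviation:
  fixes m t :: nat
  assumes h: "bij_betw h {..<n} {S. S \<subseteq> {..<m} \<and> card S \<le> t}"
    and "0 < t" "m \<le> n" "k < m"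
    and x: "mixed_strategy n x" and y: "mixed_strategy n y"
  shows "\<exists>i<n. payoff n x (subset_matrix h) y + y k
           \<le> payoff n (pure i) (subset_matrix h) y + payoff n x (subset_matrix h) (pure k) + (1 - y k) / t"
proof -
  define w where "w j = payoff n x (subset_matrix h) (pure j)" for j
  define A where "A = {..<m} - {k}"
  have rows: "h i \<subseteq> {..<m} \<and> card (h i) \<le> t" if "i < n" for i
    using h that by (auto simp: bij_betw_def)
  have w_bounds: "0 \<le> w j \<and> w j \<le> 1" if "j < n" for j
    using payoff_pure_right_bounds[OF payoff_matrix_subset_matrix x that] unfolding w_def by simp
  have y_nonneg: "\<forall>j. 0 \<le> y j"
    using y by (simp add: mixed_strategy_def)
  have "sum w A \<le> sum w {..<m}"
    using w_bounds \<open>m \<le> n\<close> by (intro sum_mono2) (auto simp: A_def)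
  also have "\<dots> \<le> t"
    unfolding w_def using rows \<open>m \<le> n\<close> by (intro sum_payoff_pure_right_subset_matrix[OF x]) auto
  finally obtain T where T: "T \<subseteq> A" "card T < t" "(\<Sum>c\<in>A. w c * y c) \<le> sum y T + sum y A / t"
    using weighted_sum_le_top_subset[of A t w y] w_bounds y_nonneg \<open>0 < t\<close> \<open>m \<le> n\<close>
    by (auto simp: A_def)
  have "sum y A + y k = sum y {..<m}"
    using \<open>k < m\<close> by (simp add: A_def sum_diff1)
  also have "\<dots> \<le> sum y {..<n}"
    using y_nonneg \<open>m \<le> n\<close> by (intro sum_mono2) auto
  finally have "sum y A / t \<le> (1 - y k) / t"
    using y by (intro divide_right_mono) (auto simp: mixed_strategy_def)
  have "finite T" "k \<notin> T"
    using T(1) finite_subset by (auto simp: A_def)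
  then have "insert k T \<in> {S. S \<subseteq> {..<m} \<and> card S \<le> t}"
    using T(1,2) \<open>k < m\<close> by (auto simp: A_def)
  then have "insert k T \<in> h ` {..<n}"
    using bij_betw_imp_surj_on[OF h] by simp
  then obtain i where i: "i < n" "h i = insert k T"
    by auto
  have "h i \<subseteq> {..<n}"
    using rows[OF i(1)] \<open>m \<le> n\<close> by auto
  then have "payoff n (pure i) (subset_matrix h) y = y k + sum y T"
    using payoff_pure_left_subset_matrix[OF i(1)] i(2) \<open>finite T\<close> \<open>k \<notin> T\<close> by simp
  moreover have "payoff n x (subset_matrix h) y = w k * y k + (\<Sum>c\<in>A. w c * y c)"
  proof -
    have "w j = 0" if "m \<le> j" "j < n" for j
      using rows that unfolding w_def by (force simp: payoff_pure_right subset_matrix_def intro!: sum.neutral)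
    then have "payoff n x (subset_matrix h) y = (\<Sum>j<m. w j * y j)"
      unfolding payoff_eq_sum_pure_right[of n x _ y] w_def[symmetric] using \<open>m \<le> n\<close>
      by (intro sum.mono_neutral_right) auto
    also have "\<dots> = w k * y k + (\<Sum>c\<in>A. w c * y c)"
      using \<open>k < m\<close> by (simp add: A_def sum.remove)
    finally show ?thesis .
  qed
  moreover have "w k * y k \<le> w k"
    using w_bounds[of k] mixed_strategy_le_one[OF y, of k] \<open>k < m\<close> \<open>m \<le> n\<close> by (simp add: mult_left_le)
  ultimately have "payoff n x (subset_matrix h) y + y k
      \<le> payoff n (pure i) (subset_matrix h) y + w k + (1 - y k) / t"
    using T(3) \<open>sum y A / t \<le> (1 - y k) / t\<close> by linarith
  then show ?thesis
    using i(1) unfolding w_def by blast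
qed

theorem theorem3:
  fixes \<epsilon> :: real
  assumes "\<epsilon> < 1/2"
  shows "\<not> (\<exists>(g_r :: nat \<Rightarrow> (nat \<Rightarrow> nat \<Rightarrow> real) \<Rightarrow> (nat \<Rightarrow> real))
               (g_c :: nat \<Rightarrow> (nat \<Rightarrow> nat \<Rightarrow> real) \<Rightarrow> (nat \<Rightarrow> nat \<Rightarrow> real) \<Rightarrow> (nat \<Rightarrow> real)).
            \<forall>n R C. n \<ge> 1 \<longrightarrow> payoff_matrix n R \<longrightarrow> payoff_matrix n C \<longrightarrow>
              mixed_strategy n (g_r n R) \<and> mixed_strategy n (g_c n R C) \<and>
              approx_NE \<epsilon> n R C (g_r n R) (g_c n R C))"
proof (intro notI, elim exE)
  fix g_r g_c
  assume g: "\<forall>n R C. n \<ge> 1 \<longrightarrow> payoff_matrix n R \<longrightarrow> payoff_matrix n C \<longrightarrow>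
    mixed_strategy n (g_r n R) \<and> mixed_strategy n (g_c n R C) \<and> approx_NE \<epsilon> n R C (g_r n R) (g_c n R C)"
  obtain t m :: nat where tm: "0 < t" "0 < m" "real t / real m + \<epsilon> / t < 1 - 2 * \<epsilon>"
    using exists_parameters[OF assms] .
  obtain n h where h: "bij_betw h {..<n} {S. S \<subseteq> {..<m} \<and> card S \<le> t}" "m \<le> n"
    using exists_enumeration_bounded_subsets[OF tm(1)] .
  define R where "R = subset_matrix h"
  define x where "x = g_r n R"
  have "1 \<le> n" "payoff_matrix n R"
    using tm(2) h(2) payoff_matrix_subset_matrix by (auto simp: R_def)
  then have x: "mixed_strategy n x"
    using g[rule_format, of n R "\<lambda>_ _. 0"] by (simp add: x_def payoff_matrix_def)
  obtain k where k: "k < m" "payoff n x R (pure k) \<le> t / m"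
    using subset_matrix_exists_light_column[OF h(1) tm(2) h(2) x] unfolding R_def .
  define C where "C = (\<lambda>(i :: nat) j. if j = k then 1 else 0 :: real)"
  define y where "y = g_c n R C"
  have "payoff_matrix n C"
    by (simp add: C_def payoff_matrix_def)
  then have y: "mixed_strategy n y" and NE: "approx_NE \<epsilon> n R C x y"
    using g[rule_format, OF \<open>1 \<le> n\<close> \<open>payoff_matrix n R\<close>] by (simp_all add: x_def y_def)
  have concentrated: "1 - \<epsilon> \<le> y k"
    using approx_NE_column_all_ones[OF x] k(1) h(2) NE by (simp add: C_def)
  obtain i where "i < n" and deviation:
      "payoff n x R y + y k \<le> payoff n (pure i) R y + payoff n x R (pure k) + (1 - y k) / t"
    using subset_matrix_profitable_deviation[OF h(1) tm(1) h(2) k(1) x y] unfolding R_def by blast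
  have "payoff n (pure i) R y \<le> payoff n x R y + \<epsilon>"
    using NE \<open>i < n\<close> by (simp add: approx_NE_def)
  moreover have "(1 - y k) / t \<le> \<epsilon> / t"
    using concentrated by (intro divide_right_mono) auto
  ultimately show False
    using deviation concentrated k(2) tm(3) by linarith
qed

end
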